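(* Let $X$ solve $dX_t=\mu_X(X_t;\theta)\,dt+\sigma_X(X_t;\theta)\,dW_t$ on $\mathcal{X}=(x_l,x_r)$ and let $Y_t=V(X_t)$, with structure $\mathcal{S}=(\theta,V)$ ($\theta$ the data-generating parameter). Assume: (a) $\mu_X(\cdot;\theta)$ and $\sigma_X^2(\cdot;\theta)>0$ are twice continuously differentiable; (b) $S(x;\theta)\to-\infty$ as $x\to x_l$ and $S(x;\theta)\to+\infty$ as $x\to x_r$; (c) $\xi(\theta)^{-1}:=\int_{\mathcal{X}}\{\sigma_X^2(x;\theta)s(x;\theta)\}^{-1}dx<\infty$; (d) $V$ is strictly increasing and twice continuously differentiable with inverse $U=V^{-1}$; (e) the drift $\mu_Y$ and diffusion $\sigma_Y^2$ of $Y$ are nonparametrically identified from the discretely sampled process $\{Y_{i\Delta}\}$. With $f_X(x;\vartheta)=\frac{\xi(\vartheta)}{\sigma_X^2(x;\vartheta)s(x;\vartheta)}$, $F_X(x;\vartheta)=\int_{x_l}^x f_X(z;\vartheta)dz$, and $f_X'$ the derivative of $f_X$ in $x$, define for $\bar x\in(0,1)$ $$\mu_{\bar X}(\bar x;\vartheta)=\mu_X(F_X^{-1}(\bar x;\vartheta);\vartheta)f_X(F_X^{-1}(\bar x;\vartheta);\vartheta)+\frac12\sigma_X^2(F_X^{-1}(\bar x;\vartheta);\vartheta)f_X'(F_X^{-1}(\bar x;\vartheta);\vartheta),$$ $$\sigma_{\bar X}(\bar x;\vartheta)=\sigma_X(F_X^{-1}(\bar x;\vartheta);\vartheta)f_X(F_X^{-1}(\bar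 x;\vartheta);\vartheta).$$ Then $\mathcal{S}$ is identified if and only if the following holds: for all $\tilde\theta\in\Theta$, [$\mu_{\bar X}(\bar x;\theta)=\mu_{\bar X}(\bar x;\tilde\theta)$ and $\sigma_{\bar X}(\bar x;\theta)=\sigma_{\bar X}(\bar x;\tilde\theta)$ for all $\bar x\in(0,1)$] if and only if $\theta=\tilde\theta$.
   Context: Scale density and scale measure: $s(x;\theta)=\exp\{-\int_{x^*}^x \frac{2\mu_X(z;\theta)}{\sigma_X^2(z;\theta)}dz\}$, $S(x;\theta)=\int_{x^*}^x s(z;\theta)dz$ for fixed $x^*\in\mathcal{X}$; under (a)–(c), $f_X$ is the stationary density of $X$. For a structure $\mathcal{S}=(\theta,V)$ with $U=V^{-1}$, the drift and diffusion of $Y$ are $\mu_Y(y;\mathcal{S})=\frac{\mu_X(U(y);\theta)}{U'(y)}-\frac12\sigma_X^2(U(y);\theta)\frac{U''(y)}{U'(y)^3}$ and $\sigma_Y(y;\mathcal{S})=\frac{\sigma_X(U(y);\theta)}{U'(y)}$. Two structures are observationally equivalent ($\mathcal{S}\sim\tilde{\mathcal{S}}$) if they yield identical $\mu_Y(\cdot)$ and $\sigma_Y(\cdot)$ on the domain of $Y$. $\mathcal{S}$ is identified (within the model of admissible structures) if $\mathcal{S}\sim\tilde{\mathcal{S}}$ implies $\mathcal{S}=\tilde{\mathcal{S}}$. *)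

theory Defs
  imports "HOL-Analysis.Analysis"
begin

(* State space: an open interval I = (x_l, x_r) of the reals (endpoints may be infinite).
   Drift mu x th and diffusion coefficient sig x th of X; parameters th of type 'p. *)

definition C2_on :: "real set \<Rightarrow> (real \<Rightarrow> real) \<Rightarrow> bool" where
  "C2_on I f \<longleftrightarrow>
     (\<forall>x\<in>I. f field_differentiable (at x) \<and> deriv f field_differentiable (at x))
     \<and> continuous_on I (deriv (deriv f))"

(* filters "x \<rightarrow> x_l" and "x \<rightarrow> x_r" within I (work for finite and infinite endpoints) *)
definition left_end :: "real set \<Rightarrow> real filter" where
  "left_end I = (INF c\<in>I. principal {x\<in>I. x < c})"

definition right_end :: "real set \<Rightarrow> real filter" where
  "right_end I = (INF c\<in>I. principal {x\<in>I. c < x})"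

(* scale density s(x;th) with fixed reference point xs (oriented integral) *)
definition scale_dens :: "real \<Rightarrow> (real \<Rightarrow> 'p \<Rightarrow> real) \<Rightarrow> (real \<Rightarrow> 'p \<Rightarrow> real)
    \<Rightarrow> 'p \<Rightarrow> real \<Rightarrow> real" where
  "scale_dens xs mu sig th x =
     exp (- (LBINT z=xs..x. 2 * mu z th / (sig z th)\<^sup>2))"

definition scale_meas :: "real \<Rightarrow> (real \<Rightarrow> 'p \<Rightarrow> real) \<Rightarrow> (real \<Rightarrow> 'p \<Rightarrow> real)
    \<Rightarrow> 'p \<Rightarrow> real \<Rightarrow> real" where
  "scale_meas xs mu sig th x = (LBINT z=xs..x. scale_dens xs mu sig th z)"

definition xi :: "real set \<Rightarrow> real \<Rightarrow> (real \<Rightarrow> 'p \<Rightarrow> real) \<Rightarrow> (real \<Rightarrow> 'p \<Rightarrow> real)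
    \<Rightarrow> 'p \<Rightarrow> real" where
  "xi I xs mu sig th =
     1 / integral I (\<lambda>x. 1 / ((sig x th)\<^sup>2 * scale_dens xs mu sig th x))"

definition fX :: "real set \<Rightarrow> real \<Rightarrow> (real \<Rightarrow> 'p \<Rightarrow> real) \<Rightarrow> (real \<Rightarrow> 'p \<Rightarrow> real)
    \<Rightarrow> 'p \<Rightarrow> real \<Rightarrow> real" where
  "fX I xs mu sig th x = xi I xs mu sig th / ((sig x th)\<^sup>2 * scale_dens xs mu sig th x)"

definition FX :: "real set \<Rightarrow> real \<Rightarrow> (real \<Rightarrow> 'p \<Rightarrow> real) \<Rightarrow> (real \<Rightarrow> 'p \<Rightarrow> real)
    \<Rightarrow> 'p \<Rightarrow> real \<Rightarrow> real" where
  "FX I xs mu sig th x = integral {z\<in>I. z \<le> x} (fX I xs mu sig th)"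

(* drift and diffusion of Xbar = F_X(X), as functions of xbar in (0,1) *)
definition mu_bar :: "real set \<Rightarrow> real \<Rightarrow> (real \<Rightarrow> 'p \<Rightarrow> real) \<Rightarrow> (real \<Rightarrow> 'p \<Rightarrow> real)
    \<Rightarrow> 'p \<Rightarrow> real \<Rightarrow> real" where
  "mu_bar I xs mu sig th xb =
     (let x = inv_into I (FX I xs mu sig th) xb
      in mu x th * fX I xs mu sig th x
         + 1/2 * (sig x th)\<^sup>2 * deriv (fX I xs mu sig th) x)"

definition sig_bar :: "real set \<Rightarrow> real \<Rightarrow> (real \<Rightarrow> 'p \<Rightarrow> real) \<Rightarrow> (real \<Rightarrow> 'p \<Rightarrow> real)
    \<Rightarrow> 'p \<Rightarrow> real \<Rightarrow> real" where
  "sig_bar I xs mu sig th xb =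
     (let x = inv_into I (FX I xs mu sig th) xb
      in sig x th * fX I xs mu sig th x)"

(* drift and diffusion of Y = V(X) for structure (th, V), U = V^{-1} *)
definition mu_Y :: "real set \<Rightarrow> (real \<Rightarrow> 'p \<Rightarrow> real) \<Rightarrow> (real \<Rightarrow> 'p \<Rightarrow> real)
    \<Rightarrow> 'p \<times> (real \<Rightarrow> real) \<Rightarrow> real \<Rightarrow> real" where
  "mu_Y I mu sig S y =
     (let th = fst S; U = inv_into I (snd S)
      in mu (U y) th / deriv U y
         - 1/2 * (sig (U y) th)\<^sup>2 * deriv (deriv U) y / (deriv U y) ^ 3)"

definition sig_Y :: "real set \<Rightarrow> (real \<Rightarrow> 'p \<Rightarrow> real) \<Rightarrow> (real \<Rightarrow> 'p \<Rightarrow> real)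
    \<Rightarrow> 'p \<times> (real \<Rightarrow> real) \<Rightarrow> real \<Rightarrow> real" where
  "sig_Y I mu sig S y =
     (let th = fst S; U = inv_into I (snd S) in sig (U y) th / deriv U y)"

definition admissible_V :: "real set \<Rightarrow> (real \<Rightarrow> real) \<Rightarrow> bool" where
  "admissible_V I V \<longleftrightarrow> strict_mono_on I V \<and> C2_on I V \<and> (\<forall>x\<in>I. deriv V x \<noteq> 0)"

definition admissible :: "'p set \<Rightarrow> real set \<Rightarrow> 'p \<times> (real \<Rightarrow> real) \<Rightarrow> bool" where
  "admissible Theta I S \<longleftrightarrow> fst S \<in> Theta \<and> admissible_V I (snd S)"

definition obs_equiv :: "real set \<Rightarrow> (real \<Rightarrow> 'p \<Rightarrow> real) \<Rightarrow> (real \<Rightarrow> 'p \<Rightarrow> real)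
    \<Rightarrow> 'p \<times> (real \<Rightarrow> real) \<Rightarrow> 'p \<times> (real \<Rightarrow> real) \<Rightarrow> bool" where
  "obs_equiv I mu sig S S' \<longleftrightarrow>
     snd S ` I = snd S' ` I \<and>
     (\<forall>y \<in> snd S ` I. mu_Y I mu sig S y = mu_Y I mu sig S' y
                      \<and> sig_Y I mu sig S y = sig_Y I mu sig S' y)"

definition struct_eq :: "real set \<Rightarrow> 'p \<times> (real \<Rightarrow> real) \<Rightarrow> 'p \<times> (real \<Rightarrow> real) \<Rightarrow> bool" where
  "struct_eq I S S' \<longleftrightarrow> fst S = fst S' \<and> (\<forall>x\<in>I. snd S x = snd S' x)"

definition identified :: "'p set \<Rightarrow> real set \<Rightarrow> (real \<Rightarrow> 'p \<Rightarrow> real) \<Rightarrow> (real \<Rightarrow> 'p \<Rightarrow> real)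
    \<Rightarrow> 'p \<times> (real \<Rightarrow> real) \<Rightarrow> bool" where
  "identified Theta I mu sig S \<longleftrightarrow>
     (\<forall>S'. admissible Theta I S' \<and> obs_equiv I mu sig S S' \<longrightarrow> struct_eq I S S')"

end

theory Submission
  imports Defs "HOL-Complex_Analysis.Conformal_Mappings"
begin

(* Let Xbar = F_X(X) and Y = V(X), and let U be the inverse of V. The stationary cdf of Y is
   G = F_X o U, so Xbar = G(Y) and Ito's formula expresses the coefficients of Xbar through
   those of Y:  sig_bar(G y) = f_Y(y) sig_Y(y)  and
   mu_bar(G y) = f_Y(y) mu_Y(y) + 1/2 sig_Y(y)^2 f_Y'(y),  where f_Y = G'.
   In turn (mu_Y, sig_Y) determine f_Y: the product f_Y sig_Y^2 has logarithmic derivative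
   2 mu_Y / sig_Y^2, and the constant factor is fixed because G maps onto (0,1). Hence
   observationally equivalent structures share G and the coefficients of Xbar, and if they
   share the parameter they share V. Conversely, if the coefficients of Xbar agree for th and
   th', then (th', V o F_th^-1 o F_th') is an admissible structure observationally equivalent
   to (th, V). *)

section \<open>Twice differentiable functions with prescribed derivatives\<close>

(* Unlike C2_on, which speaks of deriv, this names the derivatives, so that the chain rule and
   the inverse function rule can be stated as closure properties. *)
definition C2_derivs_on :: "real set \<Rightarrow> (real \<Rightarrow> real) \<Rightarrow> (real \<Rightarrow> real) \<Rightarrow> (real \<Rightarrow> real) \<Rightarrow> bool"
  where "C2_derivs_on I f f' f'' \<longleftrightarrow>
    (\<forall>x\<in>I. (f has_real_derivative f' x) (at x) \<and> (f' has_real_derivative f'' x) (at x))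
    \<and> continuous_on I f''"

lemma C2_derivs_on_deriv:
  assumes "open I" "C2_derivs_on I f f' f''" "x \<in> I"
  shows "deriv f x = f' x" "deriv (deriv f) x = f'' x"
proof -
  have deriv_f: "deriv f z = f' z" if "z \<in> I" for z
    using assms that by (auto simp: C2_derivs_on_def intro: DERIV_imp_deriv)
  then show "deriv f x = f' x" using assms(3) .
  have "(f' has_real_derivative f'' x) (at x)" using assms by (auto simp: C2_derivs_on_def)
  then have "(deriv f has_real_derivative f'' x) (at x)"
    by (rule has_field_derivative_transform_within_open[OF _ assms(1,3)]) (simp add: deriv_f)
  then show "deriv (deriv f) x = f'' x" by (rule DERIV_imp_deriv)
qed

lemma C2_derivs_on_imp_C2_on:
  assumes "open I" "C2_derivs_on I f f' f''"
  shows "C2_on I f"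
proof -
  have deriv_eq: "deriv f z = f' z" "deriv (deriv f) z = f'' z" if "z \<in> I" for z
    using C2_derivs_on_deriv[OF assms that] by auto
  have "continuous_on I f''" using assms(2) by (simp add: C2_derivs_on_def)
  then have "continuous_on I (deriv (deriv f))"
    by (rule continuous_on_eq) (simp add: deriv_eq)
  moreover have "f field_differentiable (at x) \<and> deriv f field_differentiable (at x)" if x: "x \<in> I" for x
  proof -
    have "(f has_real_derivative f' x) (at x)" "(f' has_real_derivative f'' x) (at x)"
      using assms x by (auto simp: C2_derivs_on_def)
    moreover have "(deriv f has_real_derivative f'' x) (at x)"
      by (rule has_field_derivative_transform_within_open[OF calculation(2) assms(1) x])
        (simp add: deriv_eq)
    ultimately show ?thesis by (auto simp: field_differentiable_def)
  qed
  ultimately show ?thesis by (simp add: C2_on_def)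
qed

lemma C2_on_imp_C2_derivs_on: "open I \<Longrightarrow> C2_on I f \<Longrightarrow> C2_derivs_on I f (deriv f) (deriv (deriv f))"
  by (auto simp: C2_derivs_on_def C2_on_def DERIV_deriv_iff_field_differentiable)

lemma C2_derivs_on_continuous_on:
  assumes "C2_derivs_on I f f' f''"
  shows "continuous_on I f" "continuous_on I f'"
  using assms by (auto simp: C2_derivs_on_def intro!: continuous_at_imp_continuous_on DERIV_isCont)

lemma C2_derivs_on_compose:
  assumes f: "C2_derivs_on J f f' f''" and g: "C2_derivs_on I g g' g''"
    and "g ` I \<subseteq> J"
  shows "C2_derivs_on I (f \<circ> g) (\<lambda>x. f' (g x) * g' x) (\<lambda>x. f'' (g x) * (g' x)\<^sup>2 + f' (g x) * g'' x)"
  unfolding C2_derivs_on_def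
proof (intro conjI ballI)
  fix x assume x: "x \<in> I"
  have f_at: "(f has_real_derivative f' (g x)) (at (g x))" "(f' has_real_derivative f'' (g x)) (at (g x))"
    using f x assms(3) by (auto simp: C2_derivs_on_def)
  have g_at: "(g has_real_derivative g' x) (at x)" "(g' has_real_derivative g'' x) (at x)"
    using g x by (auto simp: C2_derivs_on_def)
  show "((f \<circ> g) has_real_derivative f' (g x) * g' x) (at x)"
    using DERIV_chain[OF f_at(1) g_at(1)] .
  from DERIV_mult[OF DERIV_chain2[OF f_at(2) g_at(1)] g_at(2)]
  show "((\<lambda>x. f' (g x) * g' x) has_real_derivative f'' (g x) * (g' x)\<^sup>2 + f' (g x) * g'' x) (at x)"
    by (simp add: power2_eq_square algebra_simps)
next
  have "continuous_on I (\<lambda>x. f' (g x))" "continuous_on I (\<lambda>x. f'' (g x))"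
    using continuous_on_compose2[OF _ C2_derivs_on_continuous_on(1)[OF g] assms(3)]
      C2_derivs_on_continuous_on(2)[OF f] f by (auto simp: C2_derivs_on_def)
  moreover have "continuous_on I g'" "continuous_on I g''"
    using C2_derivs_on_continuous_on(2)[OF g] g by (auto simp: C2_derivs_on_def)
  ultimately show "continuous_on I (\<lambda>x. f'' (g x) * (g' x)\<^sup>2 + f' (g x) * g'' x)"
    by (auto intro!: continuous_intros)
qed

lemma strict_mono_on_inv_into:
  fixes f :: "'a::linorder \<Rightarrow> 'b::linorder"
  assumes "strict_mono_on I f"
  shows "strict_mono_on (f ` I) (inv_into I f)"
proof (rule strict_mono_onI)
  fix r s assume "r \<in> f ` I" "s \<in> f ` I" "r < s"
  then obtain x z where "x \<in> I" "z \<in> I" "r = f x" "s = f z" "f x < f z" by auto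
  then show "inv_into I f r < inv_into I f s"
    using assms strict_mono_on_imp_inj_on[OF assms] by (simp add: strict_mono_on_less)
qed

lemma C2_derivs_on_inv_into:
  assumes "open I" and mono: "strict_mono_on I f" and f: "C2_derivs_on I f f' f''"
    and nz: "\<And>x. x \<in> I \<Longrightarrow> f' x \<noteq> 0"
  shows "C2_derivs_on (f ` I) (inv_into I f) (\<lambda>y. 1 / f' (inv_into I f y))
           (\<lambda>y. - f'' (inv_into I f y) / (f' (inv_into I f y)) ^ 3)"
proof -
  define g where "g = inv_into I f"
  have g_f: "g (f x) = x" if "x \<in> I" for x
    using that inv_into_f_f[OF strict_mono_on_imp_inj_on[OF mono]] by (simp add: g_def)
  have g_into: "g y \<in> I" if "y \<in> f ` I" for y using that by (auto simp: g_f)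
  have g_at: "(g has_real_derivative 1 / f' (g y)) (at y)" if "y \<in> f ` I" for y
  proof -
    obtain x where x: "x \<in> I" "y = f x" using \<open>y \<in> f ` I\<close> by auto
    have "(f has_real_derivative f' x) (at x)" using f x by (auto simp: C2_derivs_on_def)
    from has_field_derivative_inverse_strong[OF this nz[OF x(1)] assms(1) x(1)
        C2_derivs_on_continuous_on(1)[OF f] g_f]
    show ?thesis using x g_f by (simp add: divide_inverse)
  qed
  have g'_at: "((\<lambda>y. 1 / f' (g y)) has_real_derivative - f'' (g y) / (f' (g y)) ^ 3) (at y)"
    if y: "y \<in> f ` I" for y
  proof -
    have "(f' has_real_derivative f'' (g y)) (at (g y))" using f g_into[OF y] by (auto simp: C2_derivs_on_def)
    from DERIV_inverse_fun[OF DERIV_chain2[OF this g_at[OF y]] nz[OF g_into[OF y]]]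
    show ?thesis by (simp add: divide_inverse power3_eq_cube ac_simps)
  qed
  have "continuous_on (f ` I) g"
    using g_at by (intro continuous_at_imp_continuous_on ballI) (blast intro: DERIV_isCont)
  then have "continuous_on (f ` I) (\<lambda>y. f' (g y))" "continuous_on (f ` I) (\<lambda>y. f'' (g y))"
    using continuous_on_compose2[OF _ _ image_subsetI[OF g_into]]
      C2_derivs_on_continuous_on(2)[OF f] f by (auto simp: C2_derivs_on_def)
  then have "continuous_on (f ` I) (\<lambda>y. - f'' (g y) / (f' (g y)) ^ 3)"
    using g_into nz by (auto intro!: continuous_intros)
  then show ?thesis using g_at g'_at by (simp add: C2_derivs_on_def g_def)
qed

section \<open>Real intervals and elementary calculus\<close>

lemma is_interval_Icc_subset:
  fixes I :: "real set"
  assumes "is_interval I" "a \<in> I" "b \<in> I"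
  shows "{a..b} \<subseteq> I"
proof
  fix z assume "z \<in> {a..b}"
  then show "z \<in> I" using assms unfolding is_interval_1 atLeastAtMost_iff by blast
qed

lemma open_interval_obtain_Icc:
  fixes I :: "real set"
  assumes "open I" "is_interval I" "a \<in> I" "b \<in> I"
  obtains d e where "d < a" "d < b" "a < e" "b < e" "{d..e} \<subseteq> I"
proof -
  have "min a b \<in> I" "max a b \<in> I" using assms(3,4) by (auto simp: min_def max_def)
  obtain r where r: "r > 0" "ball (min a b) r \<subseteq> I" using openE[OF assms(1) \<open>min a b \<in> I\<close>] .
  obtain r' where r': "r' > 0" "ball (max a b) r' \<subseteq> I" using openE[OF assms(1) \<open>max a b \<in> I\<close>] .
  define d e where "d = min a b - r/2" and "e = max a b + r'/2"
  have "d \<in> ball (min a b) r" "e \<in> ball (max a b) r'"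
    using r(1) r'(1) by (simp_all add: d_def e_def dist_real_def)
  then have "{d..e} \<subseteq> I" using r(2) r'(2) is_interval_Icc_subset[OF assms(2)] by blast
  moreover have "d < a" "d < b" "a < e" "b < e"
    using r(1) r'(1) by (simp_all add: d_def e_def min_def max_def)
  ultimately show ?thesis using that by blast
qed

lemma integral_Icc_pos:
  fixes h :: "real \<Rightarrow> real"
  assumes "continuous_on {a..b} h" "a < b" "\<And>x. x \<in> {a..b} \<Longrightarrow> h x > 0"
  shows "integral {a..b} h > 0"
proof -
  obtain x0 where x0: "x0 \<in> {a..b}" "\<And>y. y \<in> {a..b} \<Longrightarrow> h x0 \<le> h y"
    using continuous_attains_inf[of "{a..b}" h] assms by auto
  have "0 < (b - a) * h x0" using assms x0 by simp
  also have "\<dots> = integral {a..b} (\<lambda>x. h x0)" using assms by simp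
  also have "\<dots> \<le> integral {a..b} h"
    using x0 assms by (intro integral_le integrable_continuous_interval) auto
  finally show ?thesis .
qed

lemma interval_integral_has_real_derivative:
  fixes g :: "real \<Rightarrow> real"
  assumes "open I" "is_interval I" "c \<in> I" "x \<in> I" "continuous_on I g"
  shows "((\<lambda>u. LBINT y=c..u. g y) has_real_derivative g x) (at x)"
proof -
  obtain d e where de: "d < c" "d < x" "c < e" "x < e" "{d..e} \<subseteq> I"
    using open_interval_obtain_Icc[OF assms(1-4)] .
  have "((\<lambda>u. LBINT y=c..u. g y) has_vector_derivative g x) (at x within {d..e})"
    using de by (intro interval_integral_FTC2 continuous_on_subset[OF assms(5)]) auto
  then show ?thesis
    using de by (simp add: at_within_Icc_at has_real_derivative_iff_has_vector_derivative)
qed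

lemma integral_Icc_has_real_derivative:
  fixes g :: "real \<Rightarrow> real"
  assumes "continuous_on {a..b} g" "a < x" "x < b"
  shows "((\<lambda>u. integral {a..u} g) has_real_derivative g x) (at x)"
proof -
  have "x \<in> {a..b}" using assms(2,3) by simp
  from integral_has_real_derivative[OF assms(1) this] show ?thesis
    by (simp add: at_within_Icc_at[OF assms(2,3)])
qed

lemma open_bdd_below_Inf_less:
  fixes I :: "real set"
  assumes "open I" "bdd_below I" "z \<in> I"
  shows "Inf I < z"
proof -
  obtain r where r: "r > 0" "ball z r \<subseteq> I" using openE[OF assms(1,3)] .
  then have "z - r/2 \<in> I" by (auto simp: subset_iff dist_real_def)
  then have "Inf I \<le> z - r/2" using assms(2) by (rule cInf_lower)
  then show ?thesis using r(1) by simp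
qed

lemma open_interval_seq_to_left_end:
  fixes I :: "real set"
  assumes "open I" "is_interval I" "x0 \<in> I"
  obtains x :: "nat \<Rightarrow> real" where "\<And>n. x n \<in> I" "\<And>z. z \<in> I \<Longrightarrow> eventually (\<lambda>n. x n < z) sequentially"
proof (cases "bdd_below I")
  case False
  have "x0 - real n \<in> I" for n
  proof -
    obtain w where w: "w \<in> I" "w < x0 - real n"
      using False unfolding bdd_below_def by (meson not_le)
    then show ?thesis using is_interval_Icc_subset[OF assms(2) w(1) assms(3)] by auto
  qed
  moreover have "eventually (\<lambda>n. x0 - real n < z) sequentially" for z
  proof -
    obtain N :: nat where "x0 - z < real N" using reals_Archimedean2 by blast
    then show ?thesis by (intro eventually_sequentiallyI[of N]) auto
  qed
  ultimately show ?thesis by (rule that)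
next
  case True
  define a where "a = Inf I"
  have a_less: "a < z" if "z \<in> I" for z
    unfolding a_def using open_bdd_below_Inf_less[OF assms(1) True that] .
  define x where "x n = a + (x0 - a) / real (Suc n)" for n
  have x0_a: "x0 - a > 0" using a_less[OF assms(3)] by simp
  have "x n \<in> I" for n
  proof -
    have "a < x n" using x0_a by (simp add: x_def)
    then obtain w where w: "w \<in> I" "w < x n"
      using cInf_less_iff[OF _ True, of "x n"] assms(3) unfolding a_def by blast
    have "(x0 - a) / real (Suc n) \<le> x0 - a" using x0_a by (simp add: divide_le_eq)
    then have "x n \<le> x0" by (simp add: x_def)
    with w show ?thesis using is_interval_Icc_subset[OF assms(2) w(1) assms(3)] by auto
  qed
  moreover have "eventually (\<lambda>n. x n < z) sequentially" if z: "z \<in> I" for z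
  proof -
    have "(\<lambda>n. (x0 - a) / real (Suc n)) \<longlonglongrightarrow> 0" by (rule LIMSEQ_Suc[OF lim_const_over_n])
    then have "x \<longlonglongrightarrow> a + 0" unfolding x_def by (intro tendsto_add tendsto_const)
    then show ?thesis using order_tendstoD(2)[OF _ a_less[OF z]] by simp
  qed
  ultimately show ?thesis by (rule that)
qed

lemma open_interval_seq_to_right_end:
  fixes I :: "real set"
  assumes "open I" "is_interval I" "x0 \<in> I"
  obtains x :: "nat \<Rightarrow> real" where "\<And>n. x n \<in> I" "\<And>z. z \<in> I \<Longrightarrow> eventually (\<lambda>n. z < x n) sequentially"
proof -
  have "open (uminus ` I)" "is_interval (uminus ` I)" "- x0 \<in> uminus ` I"
    using assms by (auto simp: open_negations is_interval_neg_translationI)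
  then obtain x where x: "\<And>n. x n \<in> uminus ` I"
    "\<And>z. z \<in> uminus ` I \<Longrightarrow> eventually (\<lambda>n. x n < z) sequentially"
    using open_interval_seq_to_left_end by blast
  show ?thesis
  proof (rule that[of "\<lambda>n. - x n"])
    show "- x n \<in> I" for n using x(1)[of n] by auto
    show "eventually (\<lambda>n. z < - x n) sequentially" if "z \<in> I" for z
    proof -
      have "eventually (\<lambda>n. x n < - z) sequentially" using x(2) that by simp
      then show ?thesis by (rule eventually_mono) linarith
    qed
  qed
qed

lemma proportional_if_same_log_derivative:
  fixes f g h :: "real \<Rightarrow> real"
  assumes "convex J"
    and f: "\<And>y. y \<in> J \<Longrightarrow> (f has_real_derivative f y * h y) (at y)"
    and g: "\<And>y. y \<in> J \<Longrightarrow> (g has_real_derivative g y * h y) (at y)"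
    and nz: "\<And>y. y \<in> J \<Longrightarrow> f y \<noteq> 0"
  obtains c where "\<And>y. y \<in> J \<Longrightarrow> g y = c * f y"
proof -
  have "((\<lambda>y. g y / f y) has_real_derivative 0) (at y within J)" if y: "y \<in> J" for y
  proof -
    have "(g y * h y * f y - g y * (f y * h y)) / (f y * f y) = 0" by (simp add: algebra_simps)
    from DERIV_cong[OF DERIV_divide[OF g[OF y] f[OF y] nz[OF y]] this]
    show ?thesis by (rule has_field_derivative_at_within)
  qed
  from has_field_derivative_zero_constant[OF assms(1) this]
  obtain c where c: "\<And>y. y \<in> J \<Longrightarrow> g y / f y = c" by blast
  show ?thesis
  proof (rule that)
    fix y assume "y \<in> J"
    with c nz show "g y = c * f y" by (metis nonzero_eq_divide_eq mult.commute)
  qed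
qed

lemma affine_if_proportional_derivatives:
  fixes F G f :: "real \<Rightarrow> real"
  assumes "convex J"
    and F: "\<And>y. y \<in> J \<Longrightarrow> (F has_real_derivative f y) (at y)"
    and G: "\<And>y. y \<in> J \<Longrightarrow> (G has_real_derivative c * f y) (at y)"
  obtains d where "\<And>y. y \<in> J \<Longrightarrow> G y = c * F y + d"
proof -
  have "((\<lambda>y. G y - c * F y) has_real_derivative 0) (at y within J)" if y: "y \<in> J" for y
  proof -
    have "((\<lambda>y. G y - c * F y) has_real_derivative 0) (at y)"
      using DERIV_diff[OF G[OF y] DERIV_cmult[OF F[OF y], of c]] by simp
    then show ?thesis by (rule has_field_derivative_at_within)
  qed
  from has_field_derivative_zero_constant[OF assms(1) this]
  obtain d where d: "\<And>y. y \<in> J \<Longrightarrow> G y - c * F y = d" by blast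
  show ?thesis
  proof (rule that)
    fix y assume "y \<in> J"
    with d show "G y = c * F y + d" by (metis diff_eq_eq add.commute)
  qed
qed

lemma affine_self_map_unit_interval:
  fixes c d :: real
  assumes "c > 0" and onto: "(\<lambda>t. c * t + d) ` {0<..<1} = {0<..<1}"
  shows "c = 1 \<and> d = 0"
proof -
  have "(\<lambda>t. c * t + d) ` {0<..<1} = {d<..<c + d}"
  proof (intro equalityI subsetI)
    fix u assume "u \<in> (\<lambda>t. c * t + d) ` {0<..<1}"
    then obtain t where "0 < t" "t < 1" "u = c * t + d" by auto
    then show "u \<in> {d<..<c + d}" using assms(1) mult_strict_left_mono[of t 1 c] by simp
  next
    fix u assume "u \<in> {d<..<c + d}"
    then have "(u - d) / c \<in> {0<..<1}" "u = c * ((u - d) / c) + d"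
      using assms(1) by (auto simp: field_simps)
    then show "u \<in> (\<lambda>t. c * t + d) ` {0<..<1}" by blast
  qed
  with onto have "{d<..<c + d} = {0<..<1}" by simp
  then show ?thesis using assms(1) by (simp add: greaterThanLessThan_eq_iff)
qed

section \<open>The stationary distribution of the diffusion\<close>

locale stationary_diffusion =
  fixes I :: "real set" and xs :: real and mu sig :: "real \<Rightarrow> 'p \<Rightarrow> real" and th :: 'p
  assumes I_interval: "is_interval I" and I_open: "open I" and xs_in: "xs \<in> I"
    and mu_C2: "C2_on I (\<lambda>x. mu x th)"
    and sig2_C2: "C2_on I (\<lambda>x. (sig x th)\<^sup>2)"
    and sig2_pos: "\<And>x. x \<in> I \<Longrightarrow> (sig x th)\<^sup>2 > 0"
    and speed_integrable: "(\<lambda>x. 1 / ((sig x th)\<^sup>2 * scale_dens xs mu sig th x)) integrable_on I"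
begin

abbreviation "sig2 x \<equiv> (sig x th)\<^sup>2"
abbreviation "drift_ratio x \<equiv> 2 * mu x th / sig2 x"
abbreviation "sdens \<equiv> scale_dens xs mu sig th"
abbreviation "speed x \<equiv> 1 / (sig2 x * sdens x)" \<comment> \<open>half the usual speed density\<close>
abbreviation "norm_const \<equiv> xi I xs mu sig th"
abbreviation "dens \<equiv> fX I xs mu sig th"
abbreviation "cdf \<equiv> FX I xs mu sig th"

lemma sig2_continuous: "continuous_on I (\<lambda>x. sig2 x)" "continuous_on I (deriv (\<lambda>x. sig2 x))"
  using C2_derivs_on_continuous_on[OF C2_on_imp_C2_derivs_on[OF I_open sig2_C2]] by auto

lemma sig_nonzero: "x \<in> I \<Longrightarrow> sig x th \<noteq> 0"
  using sig2_pos by force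

lemma drift_ratio_continuous: "continuous_on I (\<lambda>x. drift_ratio x)"
proof -
  have "continuous_on I (\<lambda>x. 2 * mu x th)"
    using C2_derivs_on_continuous_on(1)[OF C2_on_imp_C2_derivs_on[OF I_open mu_C2]]
    by (intro continuous_intros)
  then show ?thesis
    by (rule continuous_on_divide[OF _ sig2_continuous(1)]) (simp add: sig_nonzero)
qed

lemma sdens_pos: "sdens x > 0"
  by (simp add: scale_dens_def)

lemma sdens_nonzero: "sdens x \<noteq> 0"
  using sdens_pos[of x] by simp

lemma sdens_has_derivative:
  assumes "x \<in> I"
  shows "(sdens has_real_derivative - drift_ratio x * sdens x) (at x)"
proof -
  have "((\<lambda>u. LBINT z=xs..u. drift_ratio z) has_real_derivative drift_ratio x) (at x)"
    by (rule interval_integral_has_real_derivative[OF I_open I_interval xs_in assms drift_ratio_continuous])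
  from DERIV_chain2[OF DERIV_exp DERIV_minus[OF this]] show ?thesis
    unfolding scale_dens_def by (simp add: mult.commute)
qed

lemma sdens_continuous: "continuous_on I sdens"
  using sdens_has_derivative by (intro continuous_at_imp_continuous_on ballI) (blast intro: DERIV_isCont)

lemma speed_pos: "x \<in> I \<Longrightarrow> speed x > 0"
  using sig2_pos sdens_pos by simp

lemma speed_continuous: "continuous_on I (\<lambda>x. speed x)"
  by (rule continuous_on_divide[OF continuous_on_const continuous_on_mult[OF sig2_continuous(1) sdens_continuous]])
    (simp add: sig_nonzero sdens_nonzero)

lemma integral_speed_pos: "integral I (\<lambda>x. speed x) > 0"
proof -
  obtain d e where de: "d < xs" "xs < e" "{d..e} \<subseteq> I"
    using open_interval_obtain_Icc[OF I_open I_interval xs_in xs_in] by blast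
  have "integral {d..e} (\<lambda>x. speed x) > 0"
    using de speed_pos by (intro integral_Icc_pos continuous_on_subset[OF speed_continuous]) auto
  also have "integral {d..e} (\<lambda>x. speed x) \<le> integral I (\<lambda>x. speed x)"
    using de speed_pos speed_integrable
    by (intro integral_subset_le integrable_continuous_interval continuous_on_subset[OF speed_continuous])
      (auto simp: less_imp_le)
  finally show ?thesis .
qed

lemma norm_const_pos: "norm_const > 0"
  using integral_speed_pos by (simp add: xi_def)

lemma dens_eq: "dens x = norm_const * speed x"
  by (simp add: fX_def)

lemma dens_pos: "x \<in> I \<Longrightarrow> dens x > 0"
  using norm_const_pos speed_pos by (simp add: dens_eq)

lemma dens_continuous: "continuous_on I dens"
  unfolding dens_eq by (intro continuous_intros speed_continuous)

lemma dens_integrable: "dens integrable_on I"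
  unfolding dens_eq using integrable_on_cmult_left[OF speed_integrable, of norm_const] by simp

lemma integral_dens: "integral I dens = 1"
  unfolding dens_eq using integral_cmul[where c=norm_const and f="\<lambda>x. speed x" and S=I] integral_speed_pos
  by (simp add: xi_def)

definition dens' :: "real \<Rightarrow> real" where
  "dens' x = - norm_const * (deriv (\<lambda>x. sig2 x) x - drift_ratio x * sig2 x) / ((sig2 x)\<^sup>2 * sdens x)"

lemma dens_has_derivative:
  assumes x: "x \<in> I"
  shows "(dens has_real_derivative dens' x) (at x)"
proof -
  have "((\<lambda>x. sig2 x) has_real_derivative deriv (\<lambda>x. sig2 x) x) (at x)"
    using sig2_C2 x by (simp add: C2_on_def DERIV_deriv_iff_field_differentiable)
  from DERIV_divide[OF DERIV_const DERIV_mult[OF this sdens_has_derivative[OF x]], of norm_const]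
  have "((\<lambda>x. norm_const / (sig2 x * sdens x)) has_real_derivative
      (0 * (sig2 x * sdens x) - norm_const * (deriv (\<lambda>x. sig2 x) x * sdens x
        + - drift_ratio x * sdens x * sig2 x)) / (sig2 x * sdens x * (sig2 x * sdens x))) (at x)"
    using sig_nonzero[OF x] sdens_nonzero[of x] by simp
  moreover have "dens = (\<lambda>x. norm_const / (sig2 x * sdens x))"
    by (simp add: fun_eq_iff fX_def)
  moreover have "(0 * (sig2 x * sdens x) - norm_const * (deriv (\<lambda>x. sig2 x) x * sdens x
        + - drift_ratio x * sdens x * sig2 x)) / (sig2 x * sdens x * (sig2 x * sdens x)) = dens' x"
    using sig_nonzero[OF x] sdens_nonzero[of x]
    by (simp add: dens'_def field_simps power2_eq_square)
  ultimately show ?thesis by (metis DERIV_cong)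
qed

lemma deriv_dens: "x \<in> I \<Longrightarrow> deriv dens x = dens' x"
  by (rule DERIV_imp_deriv[OF dens_has_derivative])

lemma dens'_continuous: "continuous_on I dens'"
proof -
  have "continuous_on I (\<lambda>x. - c * (d x - r x * q x) / ((q x)\<^sup>2 * s x))"
    if "continuous_on I d" "continuous_on I r" "continuous_on I q" "continuous_on I s"
      "\<And>x. x \<in> I \<Longrightarrow> q x \<noteq> 0 \<and> s x \<noteq> 0"
    for c :: real and d r q s :: "real \<Rightarrow> real"
    using that by (auto intro!: continuous_intros)
  from this[OF sig2_continuous(2) drift_ratio_continuous sig2_continuous(1) sdens_continuous]
  show ?thesis using sig_nonzero sdens_nonzero by (simp add: dens'_def[abs_def])
qed

lemma I_lebesgue: "I \<in> sets lebesgue"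
  using I_open by (metis sets_completionI_sets borel_open lborelD)

lemma dens_indicator_integrable: "(\<lambda>z. indicator {..t} z * dens z) integrable_on I"
proof (rule measurable_bounded_by_integrable_imp_integrable[OF _ dens_integrable _ I_lebesgue])
  have "((\<lambda>z. indicator {..t} z) :: real \<Rightarrow> real) \<in> borel_measurable (lebesgue_on I)"
    by (intro measurable_restrict_space1) (simp add: borel_measurable_indicator)
  moreover have "dens \<in> borel_measurable (lebesgue_on I)"
    by (rule continuous_imp_measurable_on_sets_lebesgue[OF dens_continuous I_lebesgue])
  ultimately show "(\<lambda>z. indicator {..t} z * dens z) \<in> borel_measurable (lebesgue_on I)"
    by (rule borel_measurable_times)
  show "norm (indicator {..t} x * dens x) \<le> dens x" if "x \<in> I" for x
    using dens_pos[OF that] by (simp add: indicator_def)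
qed

lemma cdf_eq_integral_indicator: "cdf t = integral I (\<lambda>z. indicator {..t} z * dens z)"
proof -
  have "(\<lambda>z. indicator {..t} z * dens z) = (\<lambda>z. if z \<in> {..t} then dens z else 0)"
    by (simp add: fun_eq_iff indicator_def)
  then have "integral I (\<lambda>z. indicator {..t} z * dens z) = integral ({..t} \<inter> I) dens"
    using integral_restrict_Int[where S="{..t}" and T=I and f=dens] by simp
  moreover have "{..t} \<inter> I = {z \<in> I. z \<le> t}" by auto
  ultimately show ?thesis by (simp add: FX_def)
qed

lemma cdf_diff:
  assumes "x \<in> I" "y \<in> I" "x \<le> y"
  shows "cdf y = cdf x + integral {x..y} dens"
proof -
  have sub: "{x..y} \<subseteq> I" using is_interval_Icc_subset[OF I_interval assms(1,2)] .
  have split: "(\<lambda>z. indicator {..y} z * dens z - indicator {..x} z * dens z)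
      = (\<lambda>z. if z \<in> {x<..y} then dens z else 0)"
    using assms(3) by (auto simp: fun_eq_iff indicator_def)
  have "cdf y - cdf x = integral I (\<lambda>z. if z \<in> {x<..y} then dens z else 0)"
    unfolding cdf_eq_integral_indicator split[symmetric]
    by (rule integral_diff[symmetric]) (rule dens_indicator_integrable)+
  also have "\<dots> = integral ({x<..y} \<inter> I) dens"
    by (rule integral_restrict_Int)
  also have "{x<..y} \<inter> I = {x<..y}" using sub by auto
  also have "integral {x<..y} dens = integral {x..y} dens"
  proof (rule integral_spike_set)
    show "negligible {z \<in> {x<..y} - {x..y}. dens z \<noteq> 0}" by (rule negligible_subset[of "{}"]) auto
    show "negligible {z \<in> {x..y} - {x<..y}. dens z \<noteq> 0}" by (rule negligible_subset[of "{x}"]) auto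
  qed
  finally show ?thesis by simp
qed

lemma cdf_has_derivative:
  assumes x: "x \<in> I"
  shows "(cdf has_real_derivative dens x) (at x)"
proof -
  obtain d e where de: "d < x" "x < e" "{d..e} \<subseteq> I"
    using open_interval_obtain_Icc[OF I_open I_interval x x] by blast
  have "((\<lambda>u. integral {d..u} dens) has_real_derivative dens x) (at x)"
    using integral_Icc_has_real_derivative[OF continuous_on_subset[OF dens_continuous de(3)] de(1,2)] .
  from DERIV_add[OF DERIV_const this, of "cdf d"]
  have D: "((\<lambda>u. cdf d + integral {d..u} dens) has_real_derivative dens x) (at x)" by simp
  have eq: "cdf d + integral {d..u} dens = cdf u" if "u \<in> {d<..<e}" for u
  proof -
    have "d \<in> I" "u \<in> I" using that de(3) by auto
    then show ?thesis using cdf_diff[of d u] that by simp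
  qed
  show ?thesis
    using de by (intro has_field_derivative_transform_within_open[OF D open_greaterThanLessThan _ eq]) auto
qed

lemma cdf_C2: "C2_derivs_on I cdf dens dens'"
  unfolding C2_derivs_on_def using cdf_has_derivative dens_has_derivative dens'_continuous by blast

lemma cdf_strict_mono: "strict_mono_on I cdf"
proof (rule strict_mono_onI)
  fix x y assume xy: "x \<in> I" "y \<in> I" "x < y"
  have sub: "{x..y} \<subseteq> I" using is_interval_Icc_subset[OF I_interval xy(1,2)] .
  have "integral {x..y} dens > 0"
    using xy sub dens_pos by (intro integral_Icc_pos continuous_on_subset[OF dens_continuous sub]) auto
  then show "cdf x < cdf y" using cdf_diff[OF xy(1,2)] xy(3) by simp
qed

lemma cdf_bounds: "cdf t \<in> {0..1}"
proof -
  have "0 \<le> integral I (\<lambda>z. indicator {..t} z * dens z)"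
    using dens_indicator_integrable dens_pos by (intro integral_nonneg) (auto simp: indicator_def less_imp_le)
  moreover have "integral I (\<lambda>z. indicator {..t} z * dens z) \<le> integral I dens"
    using dens_indicator_integrable dens_integrable dens_pos
    by (intro integral_le) (auto simp: indicator_def less_imp_le)
  ultimately show ?thesis by (simp add: cdf_eq_integral_indicator integral_dens)
qed

lemma cdf_tendsto_left_end:
  assumes "\<And>z. z \<in> I \<Longrightarrow> eventually (\<lambda>n. a n < z) sequentially"
  shows "(\<lambda>n. cdf (a n)) \<longlonglongrightarrow> 0"
proof -
  have "(\<lambda>n. integral I (\<lambda>z. indicator {..a n} z * dens z)) \<longlonglongrightarrow> integral I (\<lambda>z. 0)"
  proof (rule dominated_convergence(2)[OF dens_indicator_integrable dens_integrable])
    show "norm (indicator {..a n} z * dens z) \<le> dens z" if "z \<in> I" for n z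
      using dens_pos[OF that] by (simp add: indicator_def)
    show "(\<lambda>n. indicator {..a n} z * dens z) \<longlonglongrightarrow> 0" if "z \<in> I" for z
      using assms[OF that] by (rule tendsto_eventually[OF eventually_mono]) (simp add: indicator_def)
  qed
  then show ?thesis by (simp add: cdf_eq_integral_indicator)
qed

lemma cdf_tendsto_right_end:
  assumes "\<And>z. z \<in> I \<Longrightarrow> eventually (\<lambda>n. z < b n) sequentially"
  shows "(\<lambda>n. cdf (b n)) \<longlonglongrightarrow> 1"
proof -
  have "(\<lambda>n. integral I (\<lambda>z. indicator {..b n} z * dens z)) \<longlonglongrightarrow> integral I dens"
  proof (rule dominated_convergence(2)[OF dens_indicator_integrable dens_integrable])
    show "norm (indicator {..b n} z * dens z) \<le> dens z" if "z \<in> I" for n z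
      using dens_pos[OF that] by (simp add: indicator_def)
    show "(\<lambda>n. indicator {..b n} z * dens z) \<longlonglongrightarrow> dens z" if "z \<in> I" for z
      using assms[OF that] by (rule tendsto_eventually[OF eventually_mono]) (simp add: indicator_def)
  qed
  then show ?thesis by (simp add: cdf_eq_integral_indicator integral_dens)
qed

lemma cdf_image: "cdf ` I = {0<..<1}"
proof
  have "cdf ` I \<subseteq> {0..1}" using cdf_bounds by auto
  moreover have "open (cdf ` I)"
    using invariance_of_domain[OF C2_derivs_on_continuous_on(1)[OF cdf_C2] I_open
        strict_mono_on_imp_inj_on[OF cdf_strict_mono]] .
  ultimately have "cdf ` I \<subseteq> interior {0..1}" by (rule interior_maximal)
  then show "cdf ` I \<subseteq> {0<..<1}" by simp
next
  have "is_interval (cdf ` I)"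
    using I_interval C2_derivs_on_continuous_on(1)[OF cdf_C2]
    by (simp add: is_interval_connected_1 connected_continuous_image)
  then have between: "w \<in> cdf ` I" if "u \<in> cdf ` I" "v \<in> cdf ` I" "u \<le> w" "w \<le> v" for u v w
    using that unfolding is_interval_1 by blast
  obtain a where a: "\<And>n. a n \<in> I" "\<And>z. z \<in> I \<Longrightarrow> eventually (\<lambda>n. a n < z) sequentially"
    using open_interval_seq_to_left_end[OF I_open I_interval xs_in] by blast
  obtain b where b: "\<And>n. b n \<in> I" "\<And>z. z \<in> I \<Longrightarrow> eventually (\<lambda>n. z < b n) sequentially"
    using open_interval_seq_to_right_end[OF I_open I_interval xs_in] by blast
  show "{0<..<1} \<subseteq> cdf ` I"
  proof
    fix y :: real assume y: "y \<in> {0<..<1}"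
    have "eventually (\<lambda>n. cdf (a n) < y) sequentially"
      using order_tendstoD(2)[OF cdf_tendsto_left_end[OF a(2)]] y by simp
    then obtain k where k: "cdf (a k) < y" using eventually_happens'[OF sequentially_bot] by blast
    have "eventually (\<lambda>n. y < cdf (b n)) sequentially"
      using order_tendstoD(1)[OF cdf_tendsto_right_end[OF b(2)]] y by simp
    then obtain m where m: "y < cdf (b m)" using eventually_happens'[OF sequentially_bot] by blast
    show "y \<in> cdf ` I"
      by (rule between[of "cdf (a k)" "cdf (b m)"]) (use a(1) b(1) k m in auto)
  qed
qed

end

section \<open>The transformed process \<open>Y = V(X)\<close>\<close>

locale transformed_diffusion = stationary_diffusion +
  fixes V :: "real \<Rightarrow> real"
  assumes V_admissible: "admissible_V I V"
begin

abbreviation "J \<equiv> V ` I"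
abbreviation "U \<equiv> inv_into I V"
abbreviation "muY \<equiv> mu_Y I mu sig (th, V)"
abbreviation "sigY \<equiv> sig_Y I mu sig (th, V)"

definition "U' y = 1 / deriv V (U y)"
definition "U'' y = - deriv (deriv V) (U y) / (deriv V (U y)) ^ 3"
definition "cdf_Y y = cdf (U y)"
definition "dens_Y y = dens (U y) * U' y"

lemma V_strict_mono: "strict_mono_on I V"
  using V_admissible by (simp add: admissible_V_def)

lemma V_C2: "C2_derivs_on I V (deriv V) (deriv (deriv V))"
  using C2_on_imp_C2_derivs_on[OF I_open] V_admissible by (simp add: admissible_V_def)

lemma deriv_V_pos:
  assumes x: "x \<in> I"
  shows "deriv V x > 0"
proof -
  have "(V has_real_derivative deriv V x) (at x)" using V_C2 x unfolding C2_derivs_on_def by blast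
  from mono_on_imp_deriv_nonneg[OF strict_mono_on_imp_mono_on[OF V_strict_mono] this]
  have "deriv V x \<ge> 0" using x I_open by (simp add: interior_open)
  moreover have "deriv V x \<noteq> 0" using V_admissible x by (simp add: admissible_V_def)
  ultimately show ?thesis by simp
qed

lemma J_interval: "is_interval J"
  using I_interval C2_derivs_on_continuous_on(1)[OF V_C2]
  by (simp add: is_interval_connected_1 connected_continuous_image)

lemma J_open: "open J"
  using invariance_of_domain[OF C2_derivs_on_continuous_on(1)[OF V_C2] I_open
      strict_mono_on_imp_inj_on[OF V_strict_mono]] .

lemma U_C2: "C2_derivs_on J U U' U''"
  using C2_derivs_on_inv_into[OF I_open V_strict_mono V_C2] deriv_V_pos
  unfolding U'_def[abs_def] U''_def[abs_def] by (simp add: less_imp_neq[symmetric])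

lemma U_in: "y \<in> J \<Longrightarrow> U y \<in> I"
  by (rule inv_into_into)

lemma V_U: "y \<in> J \<Longrightarrow> V (U y) = y"
  by (rule f_inv_into_f)

lemma U_V: "x \<in> I \<Longrightarrow> U (V x) = x"
  using inv_into_f_f[OF strict_mono_on_imp_inj_on[OF V_strict_mono]] .

lemma U'_pos: "y \<in> J \<Longrightarrow> U' y > 0"
  using deriv_V_pos[OF U_in] by (simp add: U'_def)

lemma deriv_U: "y \<in> J \<Longrightarrow> deriv U y = U' y" "y \<in> J \<Longrightarrow> deriv (deriv U) y = U'' y"
  using C2_derivs_on_deriv[OF J_open U_C2] by auto

lemma cdf_Y_C2: "C2_derivs_on J cdf_Y dens_Y (\<lambda>y. dens' (U y) * (U' y)\<^sup>2 + dens (U y) * U'' y)"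
  using C2_derivs_on_compose[OF cdf_C2 U_C2] U_in
  unfolding cdf_Y_def[abs_def] dens_Y_def[abs_def] by (auto simp: o_def)

lemma cdf_Y_has_derivative: "y \<in> J \<Longrightarrow> (cdf_Y has_real_derivative dens_Y y) (at y)"
  using cdf_Y_C2 unfolding C2_derivs_on_def by blast

lemma deriv_dens_Y: "y \<in> J \<Longrightarrow> deriv dens_Y y = dens' (U y) * (U' y)\<^sup>2 + dens (U y) * U'' y"
  using cdf_Y_C2 unfolding C2_derivs_on_def by (blast intro: DERIV_imp_deriv)

lemma dens_Y_pos: "y \<in> J \<Longrightarrow> dens_Y y > 0"
  using dens_pos[OF U_in] U'_pos by (simp add: dens_Y_def)

lemma cdf_Y_image: "cdf_Y ` J = {0<..<1}"
proof -
  have "U ` J = I" using U_in U_V by force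
  then show ?thesis using cdf_image by (simp add: cdf_Y_def image_image[symmetric] del: image_image)
qed

lemma sigY_eq: "y \<in> J \<Longrightarrow> sigY y = sig (U y) th / U' y"
  by (simp add: sig_Y_def Let_def deriv_U)

lemma muY_eq: "y \<in> J \<Longrightarrow> muY y = mu (U y) th / U' y - 1/2 * sig2 (U y) * U'' y / (U' y) ^ 3"
  by (simp add: mu_Y_def Let_def deriv_U)

lemma sigY_nonzero: "y \<in> J \<Longrightarrow> sigY y \<noteq> 0"
  using sigY_eq sig_nonzero[OF U_in] U'_pos by force

lemma sig_bar_cdf_Y: "y \<in> J \<Longrightarrow> sig_bar I xs mu sig th (cdf_Y y) = dens_Y y * sigY y"
  using U'_pos[of y] strict_mono_on_imp_inj_on[OF cdf_strict_mono] U_in[of y]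
  by (simp add: sig_bar_def Let_def cdf_Y_def dens_Y_def sigY_eq)

lemma mu_bar_cdf_Y:
  assumes y: "y \<in> J"
  shows "mu_bar I xs mu sig th (cdf_Y y) = dens_Y y * muY y + 1/2 * (sigY y)\<^sup>2 * deriv dens_Y y"
proof -
  have "mu_bar I xs mu sig th (cdf_Y y) = mu (U y) th * dens (U y) + 1/2 * sig2 (U y) * dens' (U y)"
    using strict_mono_on_imp_inj_on[OF cdf_strict_mono] U_in[OF y]
    by (simp add: mu_bar_def Let_def cdf_Y_def deriv_dens)
  also have "\<dots> = dens_Y y * muY y + 1/2 * (sigY y)\<^sup>2 * deriv dens_Y y"
    using U'_pos[OF y] by (simp add: dens_Y_def muY_eq[OF y] sigY_eq[OF y] deriv_dens_Y[OF y]
        field_simps power2_eq_square power3_eq_cube)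
  finally show ?thesis .
qed

definition "dens_var_Y y = dens_Y y * (sigY y)\<^sup>2"

lemma dens_var_Y_eq: "y \<in> J \<Longrightarrow> dens_var_Y y = norm_const / (sdens (U y) * U' y)"
  using U'_pos[of y] sig_nonzero[OF U_in[of y]] sdens_nonzero[of "U y"]
  by (simp add: dens_var_Y_def dens_Y_def sigY_eq dens_eq field_simps power2_eq_square)

lemma dens_var_Y_pos: "y \<in> J \<Longrightarrow> dens_var_Y y > 0"
  using dens_Y_pos sigY_nonzero by (simp add: dens_var_Y_def)

(* The zero-flux stationary Kolmogorov equation of Y: it determines dens_Y from muY and sigY
   up to a constant factor. *)
lemma dens_var_Y_has_derivative:
  assumes y: "y \<in> J"
  shows "(dens_var_Y has_real_derivative dens_var_Y y * (2 * muY y / (sigY y)\<^sup>2)) (at y)"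
proof -
  have U: "(U has_real_derivative U' y) (at y)" "(U' has_real_derivative U'' y) (at y)"
    using U_C2 y unfolding C2_derivs_on_def by blast+
  have nz: "sdens (U y) * U' y \<noteq> 0" using U'_pos[OF y] sdens_nonzero by simp
  from DERIV_mult[OF DERIV_chain2[OF sdens_has_derivative[OF U_in[OF y]] U(1)] U(2)]
  have "((\<lambda>y. sdens (U y) * U' y) has_real_derivative
      - drift_ratio (U y) * sdens (U y) * U' y * U' y + U'' y * sdens (U y)) (at y)" .
  from DERIV_divide[OF DERIV_const this nz, of norm_const]
  have D: "((\<lambda>y. norm_const / (sdens (U y) * U' y)) has_real_derivative
      (0 * (sdens (U y) * U' y) - norm_const * (- drift_ratio (U y) * sdens (U y) * U' y * U' y
        + U'' y * sdens (U y))) / (sdens (U y) * U' y * (sdens (U y) * U' y))) (at y)" .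
  have "(0 * (sdens (U y) * U' y) - norm_const * (- drift_ratio (U y) * sdens (U y) * U' y * U' y
        + U'' y * sdens (U y))) / (sdens (U y) * U' y * (sdens (U y) * U' y))
      = dens_var_Y y * (2 * muY y / (sigY y)\<^sup>2)"
    using U'_pos[OF y] sdens_nonzero[of "U y"] sig_nonzero[OF U_in[OF y]]
    by (simp add: dens_var_Y_eq[OF y] muY_eq[OF y] sigY_eq[OF y] field_simps
        power2_eq_square power3_eq_cube)
  from DERIV_cong[OF D this] show ?thesis
    by (rule has_field_derivative_transform_within_open[OF _ J_open y]) (simp add: dens_var_Y_eq)
qed

end

section \<open>Identification\<close>

definition same_Xbar_coeffs :: "real set \<Rightarrow> real \<Rightarrow> (real \<Rightarrow> 'p \<Rightarrow> real) \<Rightarrow> (real \<Rightarrow> 'p \<Rightarrow> real)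
    \<Rightarrow> 'p \<Rightarrow> 'p \<Rightarrow> bool" where
  "same_Xbar_coeffs I xs mu sig th th' \<longleftrightarrow>
     (\<forall>xb \<in> {0<..<1}. mu_bar I xs mu sig th xb = mu_bar I xs mu sig th' xb
                     \<and> sig_bar I xs mu sig th xb = sig_bar I xs mu sig th' xb)"

locale structure_pair =
  A: transformed_diffusion I xs mu sig th V + B: transformed_diffusion I xs mu sig th' W
  for I xs mu sig th V th' W
begin

lemma obs_equiv_imp_dens_Y_proportional:
  assumes "obs_equiv I mu sig (th, V) (th', W)"
  obtains c where "c > 0" "\<And>y. y \<in> V ` I \<Longrightarrow> B.dens_Y y = c * A.dens_Y y"
proof -
  have same_J: "W ` I = V ` I" using assms by (simp add: obs_equiv_def)
  have same_Y: "\<And>y. y \<in> V ` I \<Longrightarrow> A.muY y = B.muY y \<and> A.sigY y = B.sigY y"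
    using assms unfolding obs_equiv_def snd_conv by blast
  have "(B.dens_var_Y has_real_derivative B.dens_var_Y y * (2 * A.muY y / (A.sigY y)\<^sup>2)) (at y)"
    if "y \<in> V ` I" for y
    using B.dens_var_Y_has_derivative[of y] same_Y[OF that] same_J that by simp
  with proportional_if_same_log_derivative[OF is_interval_convex[OF A.J_interval]
      A.dens_var_Y_has_derivative] A.dens_var_Y_pos
  obtain c where c: "\<And>y. y \<in> V ` I \<Longrightarrow> B.dens_var_Y y = c * A.dens_var_Y y"
    by (metis less_irrefl)
  have dens_Y: "B.dens_Y y = c * A.dens_Y y" if "y \<in> V ` I" for y
    using c[OF that] same_Y[OF that] A.sigY_nonzero[OF that]
    by (simp add: A.dens_var_Y_def B.dens_var_Y_def)
  obtain y where y: "y \<in> V ` I" using A.xs_in by blast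
  have "c > 0"
    using dens_Y[OF y] A.dens_Y_pos[OF y] B.dens_Y_pos[of y] y same_J
    by (metis zero_less_mult_pos2)
  with dens_Y that show ?thesis by blast
qed

lemma obs_equiv_imp_cdf_Y_eq:
  assumes "obs_equiv I mu sig (th, V) (th', W)" "y \<in> V ` I"
  shows "B.cdf_Y y = A.cdf_Y y"
proof -
  have same_J: "W ` I = V ` I" using assms(1) by (simp add: obs_equiv_def)
  obtain c where "c > 0" and dens_Y: "\<And>y. y \<in> V ` I \<Longrightarrow> B.dens_Y y = c * A.dens_Y y"
    using obs_equiv_imp_dens_Y_proportional[OF assms(1)] by blast
  obtain d where affine: "\<And>y. y \<in> V ` I \<Longrightarrow> B.cdf_Y y = c * A.cdf_Y y + d"
    using affine_if_proportional_derivatives[OF is_interval_convex[OF A.J_interval]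
        A.cdf_Y_has_derivative, of B.cdf_Y c] B.cdf_Y_has_derivative dens_Y same_J by metis
  \<comment> \<open>both cdfs map \<open>V ` I\<close> onto \<open>{0<..<1}\<close>, which forces the affine relation to be trivial\<close>
  have "(\<lambda>t. c * t + d) ` {0<..<1} = (\<lambda>y. c * A.cdf_Y y + d) ` V ` I"
    by (simp add: A.cdf_Y_image[symmetric] image_image)
  also have "\<dots> = {0<..<1}"
    using B.cdf_Y_image same_J affine by (metis (no_types, lifting) image_cong)
  finally have "c = 1 \<and> d = 0" by (rule affine_self_map_unit_interval[OF \<open>c > 0\<close>])
  then show ?thesis using affine[OF assms(2)] by simp
qed

lemma same_cdf_Y_imp_same_Xbar_coeffs_iff_obs_equiv:
  assumes same_J: "W ` I = V ` I" and same_cdf: "\<And>y. y \<in> V ` I \<Longrightarrow> B.cdf_Y y = A.cdf_Y y"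
  shows "same_Xbar_coeffs I xs mu sig th th' \<longleftrightarrow> obs_equiv I mu sig (th, V) (th', W)"
proof -
  have dens_eq: "B.dens_Y y = A.dens_Y y" if y: "y \<in> V ` I" for y
  proof -
    have "(B.cdf_Y has_real_derivative A.dens_Y y) (at y)"
      by (rule has_field_derivative_transform_within_open[OF A.cdf_Y_has_derivative[OF y] A.J_open y])
        (simp add: same_cdf)
    moreover have "(B.cdf_Y has_real_derivative B.dens_Y y) (at y)"
      using B.cdf_Y_has_derivative[of y] y same_J by simp
    ultimately show ?thesis by (simp add: DERIV_unique)
  qed
  have deriv_dens_eq: "deriv B.dens_Y y = deriv A.dens_Y y" if y: "y \<in> V ` I" for y
    using eventually_mono[OF eventually_nhds_in_open[OF A.J_open y] dens_eq] refl by (rule deriv_cong_ev)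
  have pointwise: "(mu_bar I xs mu sig th (A.cdf_Y y) = mu_bar I xs mu sig th' (A.cdf_Y y)
        \<and> sig_bar I xs mu sig th (A.cdf_Y y) = sig_bar I xs mu sig th' (A.cdf_Y y))
      \<longleftrightarrow> A.muY y = B.muY y \<and> A.sigY y = B.sigY y" if y: "y \<in> V ` I" for y
  proof -
    have yB: "y \<in> W ` I" using y same_J by simp
    show ?thesis
      using A.mu_bar_cdf_Y[OF y] B.mu_bar_cdf_Y[OF yB] A.sig_bar_cdf_Y[OF y] B.sig_bar_cdf_Y[OF yB]
        same_cdf[OF y] dens_eq[OF y] deriv_dens_eq[OF y] A.dens_Y_pos[OF y] by auto
  qed
  have "same_Xbar_coeffs I xs mu sig th th' \<longleftrightarrow>
      (\<forall>y \<in> V ` I. mu_bar I xs mu sig th (A.cdf_Y y) = mu_bar I xs mu sig th' (A.cdf_Y y)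
        \<and> sig_bar I xs mu sig th (A.cdf_Y y) = sig_bar I xs mu sig th' (A.cdf_Y y))"
    unfolding same_Xbar_coeffs_def A.cdf_Y_image[symmetric] by blast
  also have "\<dots> \<longleftrightarrow> obs_equiv I mu sig (th, V) (th', W)"
    using pointwise same_J by (auto simp: obs_equiv_def)
  finally show ?thesis .
qed

lemma obs_equiv_imp_same_Xbar_coeffs:
  assumes "obs_equiv I mu sig (th, V) (th', W)"
  shows "same_Xbar_coeffs I xs mu sig th th'"
proof -
  have "W ` I = V ` I" using assms by (simp add: obs_equiv_def)
  with same_cdf_Y_imp_same_Xbar_coeffs_iff_obs_equiv obs_equiv_imp_cdf_Y_eq[OF assms] assms
  show ?thesis by blast
qed

lemma obs_equiv_same_param_imp_eq_on:
  assumes "th' = th" "obs_equiv I mu sig (th, V) (th', W)" "x \<in> I"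
  shows "W x = V x"
proof -
  have same_J: "W ` I = V ` I" using assms(2) by (simp add: obs_equiv_def)
  have y: "V x \<in> V ` I" using assms(3) by simp
  have "FX I xs mu sig th' (B.U (V x)) = A.cdf (A.U (V x))"
    using obs_equiv_imp_cdf_Y_eq[OF assms(2) y] unfolding A.cdf_Y_def B.cdf_Y_def .
  then have "A.cdf (B.U (V x)) = A.cdf (A.U (V x))" using assms(1) by simp
  then have "B.U (V x) = x"
    using strict_mono_on_imp_inj_on[OF A.cdf_strict_mono] A.U_V[OF assms(3)] B.U_in[of "V x"] y same_J
      A.U_in[OF y] by (metis inj_onD)
  then show ?thesis using B.V_U[of "V x"] y same_J by simp
qed

end

lemma admissible_V_compose:
  assumes "open I" "admissible_V I V" "admissible_V I \<Phi>" "\<Phi> ` I \<subseteq> I"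
  shows "admissible_V I (V \<circ> \<Phi>)"
proof -
  have V: "C2_derivs_on I V (deriv V) (deriv (deriv V))"
    and \<Phi>: "C2_derivs_on I \<Phi> (deriv \<Phi>) (deriv (deriv \<Phi>))"
    using C2_on_imp_C2_derivs_on[OF assms(1)] assms(2,3) by (auto simp: admissible_V_def)
  note V\<Phi> = C2_derivs_on_compose[OF V \<Phi> assms(4)]
  have "strict_mono_on I (V \<circ> \<Phi>)"
  proof (rule strict_mono_onI)
    fix x y assume "x \<in> I" "y \<in> I" "x < y"
    then have "\<Phi> x < \<Phi> y" "\<Phi> x \<in> I" "\<Phi> y \<in> I"
      using assms(3,4) by (auto simp: admissible_V_def dest: strict_mono_onD)
    then show "(V \<circ> \<Phi>) x < (V \<circ> \<Phi>) y"
      using assms(2) by (auto simp: admissible_V_def dest: strict_mono_onD)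
  qed
  moreover have "deriv (V \<circ> \<Phi>) x \<noteq> 0" if "x \<in> I" for x
  proof -
    have "\<Phi> x \<in> I" using assms(4) that by auto
    then show ?thesis
      using C2_derivs_on_deriv(1)[OF assms(1) V\<Phi> that] assms(2,3) that by (simp add: admissible_V_def)
  qed
  ultimately show ?thesis
    using C2_derivs_on_imp_C2_on[OF assms(1) V\<Phi>] by (simp add: admissible_V_def)
qed

locale parameter_pair =
  A: stationary_diffusion I xs mu sig th + B: stationary_diffusion I xs mu sig th'
  for I xs mu sig th th'
begin

definition "bridge = inv_into I A.cdf \<circ> B.cdf"

lemma B_cdf_in_A_image: "x \<in> I \<Longrightarrow> B.cdf x \<in> A.cdf ` I"
  using A.cdf_image B.cdf_image by blast

lemma bridge_in: "x \<in> I \<Longrightarrow> bridge x \<in> I"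
  using B_cdf_in_A_image by (simp add: bridge_def inv_into_into)

lemma cdf_bridge: "x \<in> I \<Longrightarrow> A.cdf (bridge x) = B.cdf x"
  using B_cdf_in_A_image by (simp add: bridge_def f_inv_into_f)

lemma bridge_image: "bridge ` I = I"
proof (intro equalityI subsetI)
  show "x \<in> I" if "x \<in> bridge ` I" for x using that bridge_in by auto
  fix z assume z: "z \<in> I"
  then have "A.cdf z \<in> B.cdf ` I" by (simp add: B.cdf_image A.cdf_image[symmetric])
  then obtain x where x: "x \<in> I" "B.cdf x = A.cdf z" by (metis imageE)
  then have "bridge x = z"
    using inv_into_f_f[OF strict_mono_on_imp_inj_on[OF A.cdf_strict_mono] z] by (simp add: bridge_def)
  with x(1) show "z \<in> bridge ` I" by blast
qed

lemma bridge_admissible: "admissible_V I bridge"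
proof -
  have "C2_derivs_on (A.cdf ` I) (inv_into I A.cdf) (\<lambda>u. 1 / A.dens (inv_into I A.cdf u))
      (\<lambda>u. - A.dens' (inv_into I A.cdf u) / (A.dens (inv_into I A.cdf u)) ^ 3)"
    using C2_derivs_on_inv_into[OF A.I_open A.cdf_strict_mono A.cdf_C2] A.dens_pos by force
  from C2_derivs_on_compose[OF this B.cdf_C2] B_cdf_in_A_image
  have C2: "C2_derivs_on I bridge (\<lambda>x. 1 / A.dens (bridge x) * B.dens x) (\<lambda>x. - A.dens' (bridge x)
      / (A.dens (bridge x)) ^ 3 * (B.dens x)\<^sup>2 + 1 / A.dens (bridge x) * B.dens' x)"
    by (auto simp: bridge_def)
  have "strict_mono_on I bridge"
    using strict_mono_on_inv_into[OF A.cdf_strict_mono] B.cdf_strict_mono B_cdf_in_A_image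
    by (auto simp: bridge_def strict_mono_on_def)
  moreover have "deriv bridge x \<noteq> 0" if "x \<in> I" for x
    using C2_derivs_on_deriv(1)[OF A.I_open C2 that] A.dens_pos[OF bridge_in[OF that]] B.dens_pos[OF that]
    by simp
  ultimately show ?thesis using C2_derivs_on_imp_C2_on[OF A.I_open C2] by (simp add: admissible_V_def)
qed

end

lemma same_Xbar_coeffs_imp_obs_equiv:
  assumes "stationary_diffusion I xs mu sig th" "stationary_diffusion I xs mu sig th'"
    and V: "admissible_V I V" and same: "same_Xbar_coeffs I xs mu sig th th'"
  obtains W where "admissible_V I W" "obs_equiv I mu sig (th, V) (th', W)"
proof -
  interpret parameter_pair I xs mu sig th th'
    using assms(1,2) by (simp add: parameter_pair_def)
  define W where "W = V \<circ> bridge"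
  have W: "admissible_V I W"
    unfolding W_def using admissible_V_compose[OF A.I_open V bridge_admissible] bridge_image by simp
  interpret structure_pair I xs mu sig th V th' W
    using assms(1,2) V W by (simp add: structure_pair_def transformed_diffusion_def transformed_diffusion_axioms_def)
  have same_J: "W ` I = V ` I" by (simp only: W_def image_comp[symmetric] bridge_image)
  have "B.cdf_Y y = A.cdf_Y y" if y: "y \<in> V ` I" for y
  proof -
    obtain z where z: "z \<in> I" "bridge z = A.U y" using bridge_image A.U_in[OF y] by force
    then have "W z = y" using A.V_U[OF y] by (simp add: W_def)
    then have "B.U y = z" using B.U_V[OF z(1)] by simp
    then show ?thesis using cdf_bridge[OF z(1)] z(2) by (simp add: A.cdf_Y_def B.cdf_Y_def)
  qed
  with same_cdf_Y_imp_same_Xbar_coeffs_iff_obs_equiv[OF same_J] same W that show ?thesis by blast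
qed

lemma identified_iff_same_Xbar_coeffs_injective:
  assumes diffusion: "\<And>th. th \<in> Theta \<Longrightarrow> stationary_diffusion I xs mu sig th"
    and theta_in: "theta \<in> Theta" and d_V: "admissible_V I V"
  shows "identified Theta I mu sig (theta, V) \<longleftrightarrow>
    (\<forall>th\<in>Theta. same_Xbar_coeffs I xs mu sig theta th \<longleftrightarrow> theta = th)"
proof -
  have pair: "structure_pair I xs mu sig theta V th W" if "th \<in> Theta" "admissible_V I W" for th W
    using diffusion[OF theta_in] diffusion[OF that(1)] d_V that(2)
    by (simp add: structure_pair_def transformed_diffusion_def transformed_diffusion_axioms_def)
  show ?thesis
  proof
    assume idf: "identified Theta I mu sig (theta, V)"
    show "\<forall>th\<in>Theta. same_Xbar_coeffs I xs mu sig theta th \<longleftrightarrow> theta = th"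
    proof (intro ballI iffI)
      fix th assume th: "th \<in> Theta"
      assume "same_Xbar_coeffs I xs mu sig theta th"
      with same_Xbar_coeffs_imp_obs_equiv[OF diffusion[OF theta_in] diffusion[OF th] d_V]
      obtain W where "admissible_V I W" "obs_equiv I mu sig (theta, V) (th, W)" by blast
      with idf th show "theta = th" by (auto simp: identified_def admissible_def struct_eq_def)
    next
      fix th assume "theta = th"
      then show "same_Xbar_coeffs I xs mu sig theta th" by (simp add: same_Xbar_coeffs_def)
    qed
  next
    assume injective: "\<forall>th\<in>Theta. same_Xbar_coeffs I xs mu sig theta th \<longleftrightarrow> theta = th"
    show "identified Theta I mu sig (theta, V)"
      unfolding identified_def admissible_def struct_eq_def
    proof (intro allI impI, elim conjE)
      fix S assume "fst S \<in> Theta" "admissible_V I (snd S)" "obs_equiv I mu sig (theta, V) S"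
      then obtain th W where S: "S = (th, W)" "th \<in> Theta" "admissible_V I W"
        and obs: "obs_equiv I mu sig (theta, V) (th, W)" by (cases S) auto
      interpret structure_pair I xs mu sig theta V th W using pair[OF S(2,3)] .
      have "theta = th" using injective S(2) obs_equiv_imp_same_Xbar_coeffs[OF obs] by blast
      then show "fst (theta, V) = fst S \<and> (\<forall>x\<in>I. snd (theta, V) x = snd S x)"
        using obs_equiv_same_param_imp_eq_on[OF _ obs] S(1) by auto
    qed
  qed
qed

theorem corollary6:
  fixes Theta :: "'p set" and I :: "real set" and xs :: real
    and mu sig :: "real \<Rightarrow> 'p \<Rightarrow> real" and theta :: 'p and V :: "real \<Rightarrow> real"
  assumes I_interval: "is_interval I" and I_open: "open I" and I_ne: "I \<noteq> {}"
    and xs_in: "xs \<in> I"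
    and theta_in: "theta \<in> Theta"
    and a_mu: "\<And>th. th \<in> Theta \<Longrightarrow> C2_on I (\<lambda>x. mu x th)"
    and a_sig: "\<And>th. th \<in> Theta \<Longrightarrow> C2_on I (\<lambda>x. (sig x th)\<^sup>2)"
    and a_pos: "\<And>th x. th \<in> Theta \<Longrightarrow> x \<in> I \<Longrightarrow> (sig x th)\<^sup>2 > 0"
    and b_left: "\<And>th. th \<in> Theta \<Longrightarrow>
                   filterlim (scale_meas xs mu sig th) at_bot (left_end I)"
    and b_right: "\<And>th. th \<in> Theta \<Longrightarrow>
                   filterlim (scale_meas xs mu sig th) at_top (right_end I)"
    and c_int: "\<And>th. th \<in> Theta \<Longrightarrow>
                   (\<lambda>x. 1 / ((sig x th)\<^sup>2 * scale_dens xs mu sig th x)) integrable_on I"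
    and d_V: "admissible_V I V"
  shows "identified Theta I mu sig (theta, V) \<longleftrightarrow>
         (\<forall>th' \<in> Theta.
            ((\<forall>xb \<in> {0<..<1}. mu_bar I xs mu sig theta xb = mu_bar I xs mu sig th' xb
                               \<and> sig_bar I xs mu sig theta xb = sig_bar I xs mu sig th' xb)
             \<longleftrightarrow> theta = th'))"
proof -
  have "stationary_diffusion I xs mu sig th" if "th \<in> Theta" for th
    by unfold_locales (use assms that in auto)
  from identified_iff_same_Xbar_coeffs_injective[OF this theta_in d_V] show ?thesis
    by (simp add: same_Xbar_coeffs_def)
qed

end
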